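(* For $k\geq 0$ let $\mathcal{E}_k(x)=\sum_{n=1}^{\infty}e(n)^{k}x^n$ (with $0^0=1$). Then $\mathcal{E}_0(x)=\frac{x}{1-x}$, and for every $k\geq 1$, $$\mathcal{E}_k(x)-\mathcal{E}_k(x^2)-\frac{x^2+1}{x}\,\mathcal{E}_k(x^4)=\sum_{j=0}^{k-1}C(k,j)\left(\mathcal{E}_j(x^2)+\frac{x^2+1}{x}\,\mathcal{E}_j(x^4)\right),$$ where $C(k,j)=\binom{k}{j}$.
   Context: The Stern polynomials $B_n(t)\in\mathbb{Z}[t]$ are defined by $B_0(t)=0$, $B_1(t)=1$, and for $n\geq 1$: $B_{2n}(t)=tB_n(t)$, $B_{2n+1}(t)=B_n(t)+B_{n+1}(t)$. For $n\geq1$ let $e(n)=\deg B_n(t)$. *)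

theory Defs
  imports "HOL-Computational_Algebra.Computational_Algebra"
begin

function stern :: "nat \<Rightarrow> int poly" where
  "stern n =
     (if n = 0 then 0
      else if n = 1 then 1
      else if even n then [:0, 1:] * stern (n div 2)
      else stern (n div 2) + stern (n div 2 + 1))"
  by pat_completeness auto
termination
  by (relation "measure id") (auto elim!: oddE)

definition e :: "nat \<Rightarrow> nat" where
  "e n = degree (stern n)"

definition E :: "nat \<Rightarrow> real fps" where
  "E k = Abs_fps (\<lambda>n. if n = 0 then 0 else real (e n ^ k))"

end

theory Submission imports Defs begin

(*
  Proof idea.  Let B_n be the Stern polynomials and e(n) = deg B_n.

  (1) Every B_n with n >= 1 is a nonzero polynomial with nonnegative
      coefficients, so no cancellation can occur in B_n + B_(n+1); hence
      e(2n) = e(n) + 1 and e(2n+1) = max (e n) (e (n+1)).  Together with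
      |e(n+1) - e(n)| <= 1 this gives e(n) = e(p n) + 1 for all n >= 2, where
      the "parent" p n is n/2 for even n and the integer nearest to n/4 for
      odd n.
  (2) On power series, the operator  S G = G(x^2) + (x^2+1)/x * G(x^4)
      is exactly the reindexing  (S G)_n = G_(p n); in particular it is linear.
  (3) By (1), E_k = S (E^+_k) for k >= 1, where E^+_k = sum (e(n)+1)^k x^n, and
      by the binomial theorem E^+_k = sum_(j<=k) C(k,j) E_j.  Linearity of S
      and splitting off the term j = k yields the theorem; the formula for
      E_0 is the geometric series.
*)

declare stern.simps [simp del]

section \<open>The Stern polynomials have nonnegative coefficients\<close>

lemma stern_1 [simp]: "stern (Suc 0) = 1"
  by (subst stern.simps) simp

lemma stern_double: "n \<ge> 1 \<Longrightarrow> stern (2 * n) = [:0, 1:] * stern n"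
  by (subst stern.simps) simp

lemma stern_double_Suc: "n \<ge> 1 \<Longrightarrow> stern (2 * n + 1) = stern n + stern (n + 1)"
  by (subst stern.simps) simp

text \<open>Every index n \<ge> 2 is twice, or twice plus one, a smaller positive index;
  this is the shape of all the inductions below.\<close>

lemma nat_double_cases:
  fixes n :: nat
  assumes "n \<ge> 2"
  obtains m where "m \<ge> 1" "m < n" "n = 2 * m \<or> n = 2 * m + 1"
proof
  show "n div 2 \<ge> 1" "n div 2 < n" using assms by simp_all
  show "n = 2 * (n div 2) \<or> n = 2 * (n div 2) + 1" by presburger
qed

lemma stern_nonneg_coeffs:
  assumes "n \<ge> 1"
  shows "stern n \<noteq> 0 \<and> (\<forall>i. coeff (stern n) i \<ge> 0)"
  using assms
proof (induction n rule: less_induct)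
  case (less n)
  show ?case
  proof (cases "n = 1")
    case True
    then show ?thesis by simp
  next
    case False
    with less.prems have "n \<ge> 2" by simp
    then obtain m where m: "m \<ge> 1" "m < n" "n = 2 * m \<or> n = 2 * m + 1"
      by (rule nat_double_cases)
    have IH_m: "stern m \<noteq> 0" "\<forall>i. coeff (stern m) i \<ge> 0"
      using less.IH m by auto
    from m(3) show ?thesis
    proof
      assume "n = 2 * m"
      then show ?thesis
        using IH_m m(1) by (auto simp: stern_double coeff_pCons split: nat.split)
    next
      assume n: "n = 2 * m + 1"
      have IH_Suc: "stern (m + 1) \<noteq> 0" "\<forall>i. coeff (stern (m + 1)) i \<ge> 0"
        using less.IH n m(1) by auto
      have "coeff (stern m + stern (m + 1)) (degree (stern m)) > 0"
        using IH_m IH_Suc by (simp add: add_pos_nonneg order_le_neq_trans)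
      then have "stern m + stern (m + 1) \<noteq> 0"
        by (metis coeff_0 less_irrefl)
      then show ?thesis
        unfolding n stern_double_Suc[OF m(1)] using IH_m IH_Suc by auto
    qed
  qed
qed

text \<open>Adding two nonzero polynomials with nonnegative coefficients cannot
  cancel the leading term.\<close>

lemma degree_add_nonneg_coeffs:
  fixes p q :: "'a::linordered_idom poly"
  assumes "p \<noteq> 0" "q \<noteq> 0" "\<forall>i. coeff p i \<ge> 0" "\<forall>i. coeff q i \<ge> 0"
  shows "degree (p + q) = max (degree p) (degree q)"
proof (rule antisym)
  show "degree (p + q) \<le> max (degree p) (degree q)"
    by (rule degree_add_le_max)
  have lead_p: "coeff p (degree p) > 0" and lead_q: "coeff q (degree q) > 0"
    using assms by (simp_all add: order_le_neq_trans)
  have "coeff (p + q) (max (degree p) (degree q)) > 0"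
  proof (cases "degree p \<le> degree q")
    case True
    then show ?thesis using lead_q assms(3) by (simp add: max_def add_nonneg_pos)
  next
    case False
    then show ?thesis using lead_p assms(4) by (simp add: max_def add_pos_nonneg)
  qed
  then show "max (degree p) (degree q) \<le> degree (p + q)"
    by (intro le_degree) simp
qed

section \<open>Recursion for the degree e(n)\<close>

text \<open>No cancellation in B_(2n+1) = B_n + B_(n+1) gives the degree recursion.\<close>

lemma e_1 [simp]: "e (Suc 0) = 0"
  by (simp add: e_def)

lemma e_double: "n \<ge> 1 \<Longrightarrow> e (2 * n) = e n + 1"
  using stern_nonneg_coeffs[of n] by (simp add: e_def stern_double degree_mult_eq)

lemma e_double_Suc:
  assumes "n \<ge> 1"
  shows "e (2 * n + 1) = max (e n) (e (n + 1))"
  unfolding e_def stern_double_Suc[OF assms]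
  using stern_nonneg_coeffs[of n] stern_nonneg_coeffs[of "n + 1"] assms
  by (intro degree_add_nonneg_coeffs) auto

lemma e_2: "e 2 = 1"
  using e_double[of 1] by simp

lemma e_Suc_close:
  assumes "n \<ge> 1"
  shows "e (n + 1) \<le> e n + 1 \<and> e n \<le> e (n + 1) + 1"
  using assms
proof (induction n rule: less_induct)
  case (less n)
  show ?case
  proof (cases "n = 1")
    case True
    then show ?thesis using e_2 by (simp add: numeral_2_eq_2)
  next
    case False
    with less.prems have "n \<ge> 2" by simp
    then obtain m where m: "m \<ge> 1" "m < n" "n = 2 * m \<or> n = 2 * m + 1"
      by (rule nat_double_cases)
    have IH: "e (m + 1) \<le> e m + 1 \<and> e m \<le> e (m + 1) + 1"
      using less.IH m by blast
    from m(3) show ?thesis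
    proof
      assume "n = 2 * m"
      then show ?thesis using e_double[of m] e_double_Suc[of m] m(1) IH by auto
    next
      assume "n = 2 * m + 1"
      moreover have "2 * m + 1 + 1 = 2 * (m + 1)" by simp
      ultimately show ?thesis using e_double[of "m + 1"] e_double_Suc[of m] m(1) IH by auto
    qed
  qed
qed

text \<open>Two further steps of the recursion, using that neighbouring degrees
  are close: both residues 1 and 3 mod 4 add exactly one to the degree.\<close>

lemma e_4m_plus1: "m \<ge> 1 \<Longrightarrow> e (4 * m + 1) = e m + 1"
  using e_double_Suc[of "2 * m"] e_double[of m] e_double_Suc[of m] e_Suc_close[of m]
  by simp

lemma e_4m_plus3: "e (4 * m + 3) = e (m + 1) + 1"
proof -
  have "4 * m + 3 = 2 * (2 * m + 1) + 1" "2 * m + 1 + 1 = 2 * (m + 1)" by simp_all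
  then have "e (4 * m + 3) = max (e (2 * m + 1)) (e (2 * (m + 1)))"
    by (metis e_double_Suc le_add2)
  moreover have "e (2 * (m + 1)) = e (m + 1) + 1"
    using e_double[of "m + 1"] by simp
  moreover have "e (2 * m + 1) \<le> e (m + 1) + 1"
    using e_double_Suc[of m] e_Suc_close[of m] by (cases "m = 0") auto
  ultimately show ?thesis by simp
qed

definition parent :: "nat \<Rightarrow> nat" where
  "parent n = (if even n then n div 2 else (n + 1) div 4)"

lemma e_parent:
  assumes "n \<ge> 2"
  shows "parent n \<ge> 1 \<and> e n = e (parent n) + 1"
proof -
  obtain q r where n: "n = 4 * q + r" and "r < 4"
    by (metis div_mult_mod_eq mod_less_divisor zero_less_numeral mult.commute)
  then consider "r = 0" | "r = 1" | "r = 2" | "r = 3" by linarith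
  then show ?thesis
  proof cases
    case 1
    then show ?thesis using n assms e_double[of "2 * q"] by (simp add: parent_def)
  next
    case 2
    then have "q \<ge> 1" "parent n = q" using n assms by (simp_all add: parent_def)
    then show ?thesis using n 2 e_4m_plus1[of q] by simp
  next
    case 3
    then show ?thesis using n e_double[of "2 * q + 1"] by (simp add: parent_def)
  next
    case 4
    then show ?thesis using n e_4m_plus3[of q] by (simp add: parent_def)
  qed
qed

section \<open>The operator G(x) \<mapsto> G(x^2) + (x^2+1)/x G(x^4)\<close>

lemma fps_compose_X_power_nth:
  fixes f :: "'a::comm_ring_1 fps"
  assumes "d > 0"
  shows "(f oo fps_X ^ d) $ n = (if d dvd n then f $ (n div d) else 0)"
proof -
  have "(f oo fps_X ^ d) $ n = (\<Sum>i=0..n. if i = n div d \<and> d dvd n then f $ i else 0)"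
    using assms by (auto simp: fps_compose_nth power_mult[symmetric] intro!: sum.cong)
  also have "\<dots> = (if d dvd n then f $ (n div d) else 0)"
    by (auto simp: sum.delta' div_le_dividend)
  finally show ?thesis .
qed

definition stern_op :: "real fps \<Rightarrow> real fps" where
  "stern_op G = (G oo fps_X ^ 2) + ((fps_X ^ 2 + 1) * (G oo fps_X ^ 4)) / fps_X"

lemma stern_op_nth: "stern_op G $ n = G $ parent n"
proof -
  have "(((fps_X ^ 2 + 1) * (G oo fps_X ^ 4)) / fps_X) $ n
      = (if 4 dvd (n + 1) then G $ ((n + 1) div 4) else 0)
        + (if n \<ge> 1 \<and> 4 dvd (n - 1) then G $ ((n - 1) div 4) else 0)"
    by (simp add: fps_divide_def distrib_right fps_X_power_mult_nth fps_compose_X_power_nth)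
  moreover have "parent n = (n - 1) div 4" if "odd n" "4 dvd (n - 1)"
    using that by (simp add: parent_def) presburger
  ultimately show ?thesis
    unfolding stern_op_def fps_add_nth fps_compose_X_power_nth[OF zero_less_numeral]
    by (auto simp: parent_def) presburger+
qed

text \<open>Being a reindexing, the operator commutes with linear combinations.\<close>

lemma stern_op_linear:
  "stern_op (\<Sum>j\<in>S. of_nat (c j) * G j) = (\<Sum>j\<in>S. of_nat (c j) * stern_op (G j))"
  by (rule fps_ext) (simp add: fps_sum_nth stern_op_nth flip: fps_of_nat)

lemma E_nth: "E k $ n = (if n = 0 then 0 else real (e n ^ k))"
  by (simp add: E_def)

lemma E_0: "E 0 = fps_X / (1 - fps_X)"
proof -
  have "fps_X / (1 - fps_X) = fps_X * inverse (1 - fps_X :: real fps)"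
    by (rule fps_divide_unit') simp
  also have "\<dots> = E 0"
    by (rule fps_ext) (simp add: fps_inverse_one_minus_fps_X E_nth)
  finally show ?thesis by simp
qed

definition E_succ :: "nat \<Rightarrow> real fps" where
  "E_succ k = Abs_fps (\<lambda>n. if n = 0 then 0 else (real (e n) + 1) ^ k)"

lemma E_succ_binomial: "E_succ k = (\<Sum>j=0..k. of_nat (k choose j) * E j)"
  by (rule fps_ext)
    (simp add: E_succ_def E_nth fps_sum_nth binomial_ring atMost_atLeast0 flip: fps_of_nat)

text \<open>The degree recursion e(n) = e(parent n) + 1 in generating-function form;
  k \<ge> 1 is needed because e(1)^0 = 1 is not produced by the operator.\<close>

lemma E_eq_stern_op:
  assumes "k \<ge> 1"
  shows "E k = stern_op (E_succ k)"
proof (rule fps_ext)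
  fix n :: nat
  consider "n = 0" | "n = 1" | "n \<ge> 2" by linarith
  then show "E k $ n = stern_op (E_succ k) $ n"
  proof cases
    case 3
    then have "parent n \<ge> 1" "real (e n) = real (e (parent n)) + 1"
      using e_parent[of n] by simp_all
    then show ?thesis using 3 by (simp add: stern_op_nth E_nth E_succ_def)
  qed (use assms in \<open>simp_all add: stern_op_nth E_nth E_succ_def parent_def\<close>)
qed

theorem mainTheorem19:
  shows "E 0 = fps_X / (1 - fps_X)
    \<and> (\<forall>k\<ge>1. E k - fps_compose (E k) (fps_X ^ 2)
          - ((fps_X ^ 2 + 1) * fps_compose (E k) (fps_X ^ 4)) / fps_X
        = (\<Sum>j=0..k-1. of_nat (k choose j) *
             (fps_compose (E j) (fps_X ^ 2)
              + ((fps_X ^ 2 + 1) * fps_compose (E j) (fps_X ^ 4)) / fps_X)))"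
proof (intro conjI allI impI)
  show "E 0 = fps_X / (1 - fps_X)" by (rule E_0)
next
  fix k :: nat
  assume "k \<ge> 1"
  then obtain k' where k: "k = Suc k'" by (cases k) auto
  have "E k = stern_op (\<Sum>j=0..k. of_nat (k choose j) * E j)"
    using E_eq_stern_op[OF \<open>k \<ge> 1\<close>] by (simp add: E_succ_binomial)
  also have "\<dots> = (\<Sum>j=0..k. of_nat (k choose j) * stern_op (E j))"
    by (rule stern_op_linear)
  also have "\<dots> = (\<Sum>j=0..k-1. of_nat (k choose j) * stern_op (E j)) + stern_op (E k)"
    by (simp add: k)
  finally show "E k - fps_compose (E k) (fps_X ^ 2)
          - ((fps_X ^ 2 + 1) * fps_compose (E k) (fps_X ^ 4)) / fps_X
        = (\<Sum>j=0..k-1. of_nat (k choose j) *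
             (fps_compose (E j) (fps_X ^ 2)
              + ((fps_X ^ 2 + 1) * fps_compose (E j) (fps_X ^ 4)) / fps_X))"
    by (simp add: stern_op_def algebra_simps)
qed

end
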